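(* Let $\theta\in(0,\frac{\pi}{2})$ and let $\Sigma^{\tan\theta}\subset\mathbb{R}^4$ be the minimal surface given by the conformal harmonic map \[ \mathbf{X}^{\tan\theta}(U,V)=\Big(\frac{\sin\theta}{\cos\theta}\sinh U\cos V,\ \cosh U\cos V,\ \frac{1}{\cos\theta}\cosh U\sin V,\ U\Big),\qquad (U,V)\in\mathbb{R}^2, \] with coordinates $(\mathbf{x}_1,\mathbf{x}_2,\mathbf{x}_3,\mathbf{x}_4)$ on $\mathbb{R}^4$. Then: (1) For each constant $U_0\in\mathbb{R}$, the level set $\mathcal{C}_{U_0}=\Sigma^{\tan\theta}\cap\{\mathbf{x}_4=U_0\}$ is an ellipse; in particular the neck $\mathcal{C}_0=\Sigma^{\tan\theta}\cap\{\mathbf{x}_4=0\}$ is congruent to the ellipse $\mathbf{x}^2+(\cos^2\theta)\,\mathbf{y}^2=1$. (2) As $U\to\infty$ (or $U\to-\infty$), the ellipse $\mathcal{C}_U$ converges to a circle, in the sense that the ratio of the lengths of its two semi-axes tends to $1$. *)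

theory Defs
  imports "HOL-Analysis.Analysis"
begin

definition Xmap :: "real \<Rightarrow> real \<Rightarrow> real \<Rightarrow> real^4" where
  "Xmap \<theta> U V = vector [sin \<theta> / cos \<theta> * sinh U * cos V, cosh U * cos V,
                        1 / cos \<theta> * cosh U * sin V, U]"

definition Sigma_surf :: "real \<Rightarrow> (real^4) set" where
  "Sigma_surf \<theta> = (\<lambda>(U, V). Xmap \<theta> U V) ` UNIV"

definition level_curve :: "real \<Rightarrow> real \<Rightarrow> (real^4) set" where
  "level_curve \<theta> U0 = Sigma_surf \<theta> \<inter> {x. x $ 4 = U0}"

definition ellipse_with_axes :: "'a::real_inner set \<Rightarrow> real \<Rightarrow> real \<Rightarrow> bool" where
  "ellipse_with_axes E A B \<longleftrightarrow>
     (\<exists>c a b. a \<noteq> 0 \<and> b \<noteq> 0 \<and> inner a b = 0 \<and> norm a = A \<and> norm b = B \<and>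
        E = range (\<lambda>t. c + cos t *\<^sub>R a + sin t *\<^sub>R b))"

definition is_ellipse :: "'a::real_inner set \<Rightarrow> bool" where
  "is_ellipse E \<longleftrightarrow> (\<exists>A B. ellipse_with_axes E A B)"

definition congruent_to_planar :: "(real^4) set \<Rightarrow> (real^2) set \<Rightarrow> bool" where
  "congruent_to_planar S P \<longleftrightarrow>
     (\<exists>g :: real^2 \<Rightarrow> real^4. (\<forall>p q. dist (g p) (g q) = dist p q) \<and> g ` P = S)"

end

theory Submission
  imports Defs
begin

text \<open>For fixed U the map V \<mapsto> Xmap \<theta> U V is c + cos V a + sin V b with the orthogonal
  vectors a = (tan \<theta> sinh U, cosh U, 0, 0) and b = (0, 0, cosh U / cos \<theta>, 0), so each level
  set is an ellipse with semi-axes |a| and |b|; for U = 0 it lies in the x2x3-plane and is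
  x2^2 + cos^2 \<theta> x3^2 = 1 there. The ratio |a| / |b| equals
  sqrt (sin^2 \<theta> tanh^2 U + cos^2 \<theta>), which tends to 1 as tanh U tends to 1 or -1.\<close>

lemma vector_4 [simp]:
  "(vector [x1, x2, x3, x4] :: 'a::zero^4) $ 1 = x1"
  "(vector [x1, x2, x3, x4] :: 'a::zero^4) $ 2 = x2"
  "(vector [x1, x2, x3, x4] :: 'a::zero^4) $ 3 = x3"
  "(vector [x1, x2, x3, x4] :: 'a::zero^4) $ 4 = x4"
  by (simp_all add: vector_def)

lemma norm_vec_4: "norm (x::real^4) = sqrt ((x$1)\<^sup>2 + (x$2)\<^sup>2 + (x$3)\<^sup>2 + (x$4)\<^sup>2)"
  by (simp add: norm_vec_def L2_set_def sum_4)

lemma ellipse_with_axes_range: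
  fixes a b c :: "'a::real_inner"
  assumes "a \<noteq> 0" "b \<noteq> 0" "inner a b = 0"
  shows "ellipse_with_axes (range (\<lambda>t. c + cos t *\<^sub>R a + sin t *\<^sub>R b)) (norm a) (norm b)"
  unfolding ellipse_with_axes_def using assms by blast

lemma range_ellipse_param:
  assumes "k > 0"
  shows "range (\<lambda>t. vector [cos t, sin t / k] :: real^2) = {p. (p$1)\<^sup>2 + k\<^sup>2 * (p$2)\<^sup>2 = 1}"
proof (intro set_eqI iffI)
  fix p :: "real^2"
  assume "p \<in> {p. (p$1)\<^sup>2 + k\<^sup>2 * (p$2)\<^sup>2 = 1}"
  then have "(p$1)\<^sup>2 + (k * p$2)\<^sup>2 = 1"
    by (simp add: power_mult_distrib)
  then obtain t where "p$1 = cos t" "k * p$2 = sin t"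
    by (rule sincos_total_2pi)
  with assms have "p = vector [cos t, sin t / k]"
    by (simp add: vec_eq_iff forall_2 field_simps)
  then show "p \<in> range (\<lambda>t. vector [cos t, sin t / k])"
    by blast
qed (use assms in \<open>auto simp: power_divide\<close>)

definition level_center :: "real \<Rightarrow> real^4" where
  "level_center U = vector [0, 0, 0, U]"

definition level_axis1 :: "real \<Rightarrow> real \<Rightarrow> real^4" where
  "level_axis1 \<theta> U = vector [sin \<theta> / cos \<theta> * sinh U, cosh U, 0, 0]"

definition level_axis2 :: "real \<Rightarrow> real \<Rightarrow> real^4" where
  "level_axis2 \<theta> U = vector [0, 0, cosh U / cos \<theta>, 0]"

lemmas level_defs = level_center_def level_axis1_def level_axis2_def

lemma Xmap_eq_ellipse_param:
  "Xmap \<theta> U V = level_center U + cos V *\<^sub>R level_axis1 \<theta> U + sin V *\<^sub>R level_axis2 \<theta> U"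
  by (simp add: Xmap_def level_defs vec_eq_iff forall_4)

lemma level_curve_eq_range: "level_curve \<theta> U = range (Xmap \<theta> U)"
proof -
  have "Xmap \<theta> U' V $ 4 = U'" for U' V
    by (simp add: Xmap_def)
  then show ?thesis
    unfolding level_curve_def Sigma_surf_def by force
qed

lemma ellipse_with_axes_level_curve:
  assumes "cos \<theta> \<noteq> 0"
  shows "ellipse_with_axes (level_curve \<theta> U) (norm (level_axis1 \<theta> U)) (norm (level_axis2 \<theta> U))"
proof -
  have "level_axis1 \<theta> U $ 2 \<noteq> 0" "level_axis2 \<theta> U $ 3 \<noteq> 0"
    using assms by (simp_all add: level_defs)
  then have "level_axis1 \<theta> U \<noteq> 0" "level_axis2 \<theta> U \<noteq> 0"
    by auto
  moreover have "inner (level_axis1 \<theta> U) (level_axis2 \<theta> U) = 0"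
    by (simp add: level_defs inner_vec_def sum_4)
  ultimately show ?thesis
    unfolding level_curve_eq_range Xmap_eq_ellipse_param by (rule ellipse_with_axes_range)
qed

lemma level_curve_0_congruent:
  assumes "cos \<theta> > 0"
  shows "congruent_to_planar (level_curve \<theta> 0) {p. (p$1)\<^sup>2 + (cos \<theta>)\<^sup>2 * (p$2)\<^sup>2 = 1}"
proof -
  define g :: "real^2 \<Rightarrow> real^4" where "g p = vector [0, p$1, p$2, 0]" for p
  have "dist (g p) (g q) = dist p q" for p q
    by (simp add: dist_norm norm_vec_4 g_def norm_vec_def L2_set_def sum_2)
  moreover have "g (vector [cos t, sin t / cos \<theta>]) = Xmap \<theta> 0 t" for t
    by (simp add: g_def Xmap_def vec_eq_iff forall_4)
  then have "g ` range (\<lambda>t. vector [cos t, sin t / cos \<theta>]) = level_curve \<theta> 0"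
    unfolding level_curve_eq_range image_image by presburger
  ultimately show ?thesis
    unfolding congruent_to_planar_def range_ellipse_param[OF assms] by blast
qed

lemma level_axes_ratio:
  assumes "cos \<theta> > 0"
  shows "norm (level_axis1 \<theta> U) / norm (level_axis2 \<theta> U) = sqrt ((sin \<theta> * tanh U)\<^sup>2 + (cos \<theta>)\<^sup>2)"
proof -
  have "(sin \<theta> / cos \<theta> * sinh U)\<^sup>2 + (cosh U)\<^sup>2
      = (cosh U / cos \<theta>)\<^sup>2 * ((sin \<theta> * tanh U)\<^sup>2 + (cos \<theta>)\<^sup>2)"
    using assms by (simp add: tanh_def field_simps power2_eq_square)
  then have "norm (level_axis1 \<theta> U) = cosh U / cos \<theta> * sqrt ((sin \<theta> * tanh U)\<^sup>2 + (cos \<theta>)\<^sup>2)"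
    using assms by (simp add: norm_vec_4 level_axis1_def real_sqrt_mult)
  moreover have "norm (level_axis2 \<theta> U) = cosh U / cos \<theta>"
    using assms by (simp add: norm_vec_4 level_axis2_def)
  ultimately show ?thesis
    using assms by simp
qed

lemma level_axes_ratio_tendsto:
  assumes "cos \<theta> > 0" and F: "(tanh \<longlongrightarrow> s) F" and "s\<^sup>2 = 1"
  shows "((\<lambda>U. norm (level_axis1 \<theta> U) / norm (level_axis2 \<theta> U)) \<longlongrightarrow> 1) F"
proof -
  have "((\<lambda>U. sqrt ((sin \<theta> * tanh U)\<^sup>2 + (cos \<theta>)\<^sup>2)) \<longlongrightarrow> sqrt ((sin \<theta> * s)\<^sup>2 + (cos \<theta>)\<^sup>2)) F"
    by (intro tendsto_intros F)
  moreover have "sqrt ((sin \<theta> * s)\<^sup>2 + (cos \<theta>)\<^sup>2) = 1"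
    using \<open>s\<^sup>2 = 1\<close> by (simp add: power_mult_distrib)
  ultimately show ?thesis
    unfolding level_axes_ratio[OF assms(1)] by simp
qed

theorem theorem6p3:
  fixes \<theta> :: real
  assumes "0 < \<theta>" and "\<theta> < pi / 2"
  shows "(\<forall>U0. is_ellipse (level_curve \<theta> U0))
       \<and> congruent_to_planar (level_curve \<theta> 0)
           {p :: real^2. (p $ 1)\<^sup>2 + (cos \<theta>)\<^sup>2 * (p $ 2)\<^sup>2 = 1}
       \<and> (\<exists>A B :: real \<Rightarrow> real.
            (\<forall>U. ellipse_with_axes (level_curve \<theta> U) (A U) (B U))
            \<and> ((\<lambda>U. A U / B U) \<longlongrightarrow> 1) at_top
            \<and> ((\<lambda>U. A U / B U) \<longlongrightarrow> 1) at_bot)"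
proof -
  have cos_pos: "cos \<theta> > 0"
    using assms by (intro cos_gt_zero) auto
  have axes: "ellipse_with_axes (level_curve \<theta> U) (norm (level_axis1 \<theta> U)) (norm (level_axis2 \<theta> U))"
    for U using cos_pos by (simp add: ellipse_with_axes_level_curve)
  show ?thesis
  proof (intro conjI exI allI)
    show "is_ellipse (level_curve \<theta> U)" for U
      using axes unfolding is_ellipse_def by blast
    show "congruent_to_planar (level_curve \<theta> 0) {p. (p$1)\<^sup>2 + (cos \<theta>)\<^sup>2 * (p$2)\<^sup>2 = 1}"
      using cos_pos by (rule level_curve_0_congruent)
    show "((\<lambda>U. norm (level_axis1 \<theta> U) / norm (level_axis2 \<theta> U)) \<longlongrightarrow> 1) at_top"
      using cos_pos tanh_real_at_top by (rule level_axes_ratio_tendsto) simp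
    show "((\<lambda>U. norm (level_axis1 \<theta> U) / norm (level_axis2 \<theta> U)) \<longlongrightarrow> 1) at_bot"
      using cos_pos tanh_real_at_bot by (rule level_axes_ratio_tendsto) simp
  qed (rule axes)
qed

end
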